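(* Let $f\in\mathbb{R}^n\setminus\mathbb{Z}^n$ and $B,L\in\mathcal{C}^n_f$. The following are equivalent: (i) $C_B(R,f)\subseteq C_L(R,f)$ for every $k\in\mathbb{N}$ and every $R\in\mathbb{R}^{n\times k}$; (ii) $B\supseteq L$; (iii) $\psi_{B-f}\le\psi_{L-f}$ pointwise on $\mathbb{R}^n$; (iv) $\rho_f(B,L)\le1$.
   Context: $\mathcal{C}^n_f$ is the family of all $n$-dimensional closed convex subsets of $\mathbb{R}^n$ containing $f$ in their interior. For $B$ closed convex with $0\in\operatorname{int}(B)$, $\psi_B(r)=\inf\{\lambda>0:r\in\lambda B\}$. For $R=(r_1,\dots,r_k)$ and $B\in\mathcal{C}^n_f$, $C_B(R,f)=\{s\in\mathbb{R}^k_{\ge0}:\sum_{j=1}^k s_j\psi_{B-f}(r_j)\ge1\}$. $\rho_f(B,L)=\inf\{\alpha>0:C_B(R,f)\subseteq\frac1\alpha C_L(R,f)$ for all $k\in\mathbb{N}$ and all $R\in\mathbb{R}^{n\times k}\}$. *)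

theory Defs
  imports "HOL-Analysis.Analysis"
begin

definition convC :: "real^'n \<Rightarrow> (real^'n) set \<Rightarrow> bool" where
  "convC f B \<longleftrightarrow> closed B \<and> convex B \<and> aff_dim B = int CARD('n) \<and> f \<in> interior B"

definition psi :: "(real^'n) set \<Rightarrow> real^'n \<Rightarrow> real" where
  "psi B r = Inf {t. t > 0 \<and> r \<in> (\<lambda>x. t *\<^sub>R x) ` B}"

definition shift :: "(real^'n) set \<Rightarrow> real^'n \<Rightarrow> (real^'n) set" where
  "shift B f = (\<lambda>x. x - f) ` B"

text \<open>C_B(R,f); R = (r_1,...,r_k) is a list of k vectors (columns), s in R^k_{>=0} is a list of length k.\<close>
definition CB :: "(real^'n) set \<Rightarrow> (real^'n) list \<Rightarrow> real^'n \<Rightarrow> real list set" where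
  "CB B R f = {s. length s = length R \<and> (\<forall>x\<in>set s. x \<ge> 0) \<and>
      (\<Sum>j<length R. s ! j * psi (shift B f) (R ! j)) \<ge> 1}"

text \<open>rho_f(B,L), valued in extended reals (Inf of the empty set is +infinity).\<close>
definition rho :: "real^'n \<Rightarrow> (real^'n) set \<Rightarrow> (real^'n) set \<Rightarrow> ereal" where
  "rho f B L = Inf (ereal ` {\<alpha>::real. \<alpha> > 0 \<and>
      (\<forall>R::(real^'n) list. CB B R f \<subseteq> (map (\<lambda>x. x / \<alpha>)) ` CB L R f)})"

end

theory Submission
  imports Defs
begin

text \<open>For a closed convex K with 0 in its interior, the gauge characterises membership:
  r \<in> K exactly when psi K r \<le> 1. Hence pointwise comparison of gauges is reverse inclusion
  of the bodies, and testing the inequality defining C_B(R,f) on single vectors R = [r]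
  recovers psi_{B-f}(r) \<le> \<alpha> psi_{L-f}(r) from the scaled containment defining rho;
  summing with nonnegative weights gives the converse.\<close>

lemma psi_set_nonempty:
  fixes K :: "(real^'n) set"
  assumes "0 \<in> interior K"
  shows "\<exists>t>0. r \<in> (\<lambda>x. t *\<^sub>R x) ` K"
proof -
  obtain e where e: "e > 0" "ball 0 e \<subseteq> K"
    using assms mem_interior by blast
  define t where "t = 2 * (norm r + 1) / e"
  have t: "t > 0"
    unfolding t_def using e by (intro divide_pos_pos) (auto intro: add_nonneg_pos)
  have "norm ((1/t) *\<^sub>R r) = norm r * e / (2 * (norm r + 1))"
    using t e by (simp add: t_def)
  also have "\<dots> < e"
    using e by (simp add: field_simps add_pos_nonneg add_nonneg_pos)
  finally have "(1/t) *\<^sub>R r \<in> K"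
    using e by auto
  moreover have "r = t *\<^sub>R ((1/t) *\<^sub>R r)"
    using t by simp
  ultimately show ?thesis
    using t by blast
qed

lemma psi_nonneg:
  fixes K :: "(real^'n) set"
  assumes "0 \<in> interior K"
  shows "psi K r \<ge> 0"
  unfolding psi_def using psi_set_nonempty[OF assms, of r] by (intro cInf_greatest) auto

lemma psi_antimono:
  fixes K K' :: "(real^'n) set"
  assumes "0 \<in> interior K" "K \<subseteq> K'"
  shows "psi K' r \<le> psi K r"
  unfolding psi_def
proof (rule cInf_superset_mono)
  show "{t. 0 < t \<and> r \<in> (*\<^sub>R) t ` K} \<noteq> {}"
    using psi_set_nonempty[OF assms(1), of r] by auto
  show "bdd_below {t::real. 0 < t \<and> r \<in> (*\<^sub>R) t ` K'}"
    by (rule bdd_belowI[of _ 0]) auto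
  show "{t. 0 < t \<and> r \<in> (*\<^sub>R) t ` K} \<subseteq> {t. 0 < t \<and> r \<in> (*\<^sub>R) t ` K'}"
    using assms(2) by auto
qed

lemma psi_le_1_if_mem:
  fixes K :: "(real^'n) set"
  assumes "r \<in> K"
  shows "psi K r \<le> 1"
  unfolding psi_def
proof (rule cInf_lower)
  show "1 \<in> {t. 0 < t \<and> r \<in> (*\<^sub>R) t ` K}"
    using assms by auto
  show "bdd_below {t::real. 0 < t \<and> r \<in> (*\<^sub>R) t ` K}"
    by (rule bdd_belowI[of _ 0]) auto
qed

lemma mem_if_psi_le_1:
  fixes K :: "(real^'n) set"
  assumes "closed K" "convex K" "0 \<in> interior K" "psi K r \<le> 1"
  shows "r \<in> K"
proof -
  have "0 \<in> K"
    using assms(3) interior_subset by blast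
  define S where "S = {c::real. c *\<^sub>R r \<in> K}"
  have "closed S"
  proof -
    have "S = (\<lambda>c::real. c *\<^sub>R r) -` K"
      by (auto simp: S_def)
    then show ?thesis
      using assms(1) by (simp add: continuous_closed_vimage)
  qed
  have "{0<..<1} \<subseteq> S"
  proof
    fix c :: real
    assume c: "c \<in> {0<..<1}"
    have "1 < 1 / c"
      using c by simp
    then have "Inf {t. 0 < t \<and> r \<in> (*\<^sub>R) t ` K} < 1 / c"
      using assms(4) unfolding psi_def by linarith
    then obtain s where s: "s > 0" "r \<in> (*\<^sub>R) s ` K" "s < 1 / c"
      using cInf_lessD[of "{t. 0 < t \<and> r \<in> (*\<^sub>R) t ` K}"] psi_set_nonempty[OF assms(3), of r]
      by auto
    then obtain k where "k \<in> K" "r = s *\<^sub>R k"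
      by auto
    \<comment> \<open>c r = (c s) k lies on the segment from 0 to k\<close>
    have "c * s \<le> 1" "0 \<le> c * s"
      using s c by (auto simp: field_simps)
    then have "(c * s) *\<^sub>R k + (1 - c * s) *\<^sub>R 0 \<in> K"
      using assms(2) \<open>k \<in> K\<close> \<open>0 \<in> K\<close> by (intro convexD) auto
    then show "c \<in> S"
      using \<open>r = s *\<^sub>R k\<close> by (simp add: S_def)
  qed
  then have "closure {0<..<(1::real)} \<subseteq> S"
    using \<open>closed S\<close> by (rule closure_minimal)
  then have "1 \<in> S"
    by auto
  then show ?thesis
    by (simp add: S_def)
qed

lemma psi_le_1_iff:
  fixes K :: "(real^'n) set"
  assumes "closed K" "convex K" "0 \<in> interior K"
  shows "psi K r \<le> 1 \<longleftrightarrow> r \<in> K"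
  using assms mem_if_psi_le_1 psi_le_1_if_mem by blast

lemma psi_le_psi_iff_subset:
  fixes K K' :: "(real^'n) set"
  assumes "closed K" "convex K" "0 \<in> interior K" "0 \<in> interior K'"
  shows "(\<forall>r. psi K r \<le> psi K' r) \<longleftrightarrow> K' \<subseteq> K"
proof
  assume le: "\<forall>r. psi K r \<le> psi K' r"
  show "K' \<subseteq> K"
  proof
    fix r
    assume "r \<in> K'"
    then have "psi K r \<le> 1"
      using le psi_le_1_if_mem order_trans by blast
    then show "r \<in> K"
      using psi_le_1_iff[OF assms(1-3)] by blast
  qed
qed (use psi_antimono[OF assms(4)] in blast)

lemma shift_subset_shift_iff: "shift L f \<subseteq> shift B f \<longleftrightarrow> L \<subseteq> B"
  by (auto simp: shift_def inj_image_subset_iff inj_def)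

lemma convC_shift:
  assumes "convC f B"
  shows "closed (shift B f)" "convex (shift B f)" "0 \<in> interior (shift B f)"
  using assms
  by (auto simp: convC_def shift_def closed_translation_subtract interior_translation_subtract)

lemma CB_singleton_iff:
  "s \<in> CB B [r] f \<longleftrightarrow> (\<exists>a. s = [a] \<and> a \<ge> 0 \<and> a * psi (shift B f) r \<ge> 1)"
  by (cases s rule: list.exhaust) (auto simp: CB_def)

lemma CB_mono:
  assumes "\<forall>r. psi (shift B f) r \<le> psi (shift L f) r"
  shows "CB B R f \<subseteq> CB L R f"
proof
  fix s
  assume s: "s \<in> CB B R f"
  have "(\<Sum>j<length R. s ! j * psi (shift B f) (R ! j))
      \<le> (\<Sum>j<length R. s ! j * psi (shift L f) (R ! j))"
  proof (rule sum_mono)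
    fix j
    assume "j \<in> {..<length R}"
    then have "s ! j \<ge> 0"
      using s by (auto simp: CB_def)
    then show "s ! j * psi (shift B f) (R ! j) \<le> s ! j * psi (shift L f) (R ! j)"
      using assms by (simp add: mult_left_mono)
  qed
  then show "s \<in> CB L R f"
    using s by (auto simp: CB_def)
qed

lemma psi_le_scaled_psi_if_CB_subset:
  assumes "0 \<in> interior (shift L f)" "\<alpha> > 0"
    and "CB B [r] f \<subseteq> map (\<lambda>x. x / \<alpha>) ` CB L [r] f"
  shows "psi (shift B f) r \<le> \<alpha> * psi (shift L f) r"
proof (cases "psi (shift B f) r > 0")
  case True
  then have "[1 / psi (shift B f) r] \<in> CB B [r] f"
    by (simp add: CB_singleton_iff)
  then have "[1 / psi (shift B f) r] \<in> map (\<lambda>x. x / \<alpha>) ` CB L [r] f"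
    using assms(3) by (rule subsetD[rotated])
  then obtain t where "t \<in> CB L [r] f" "[1 / psi (shift B f) r] = map (\<lambda>x. x / \<alpha>) t"
    by (rule imageE) simp
  then obtain b where b: "1 / psi (shift B f) r = b / \<alpha>" "b * psi (shift L f) r \<ge> 1"
    by (auto simp: CB_singleton_iff)
  then have "\<alpha> = b * psi (shift B f) r"
    using True assms(2) by (simp add: frac_eq_eq)
  then have "\<alpha> * psi (shift L f) r = psi (shift B f) r * (b * psi (shift L f) r)"
    by (simp add: ac_simps)
  also have "\<dots> \<ge> psi (shift B f) r * 1"
    using True b(2) by (intro mult_left_mono) auto
  finally show ?thesis
    by simp
next
  case False
  moreover have "0 \<le> \<alpha> * psi (shift L f) r"
    using assms(2) psi_nonneg[OF assms(1), of r] by simp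
  ultimately show ?thesis
    by linarith
qed

lemma CB_subset_iff_psi_le:
  assumes "0 \<in> interior (shift L f)"
  shows "(\<forall>R. CB B R f \<subseteq> CB L R f) \<longleftrightarrow> (\<forall>r. psi (shift B f) r \<le> psi (shift L f) r)"
proof
  assume "\<forall>R. CB B R f \<subseteq> CB L R f"
  then show "\<forall>r. psi (shift B f) r \<le> psi (shift L f) r"
    using psi_le_scaled_psi_if_CB_subset[OF assms, of 1 B] by (simp cong: list.map_cong)
qed (use CB_mono[of B f L] in blast)

lemma rho_le_1_iff_psi_le:
  assumes "0 \<in> interior (shift L f)"
  shows "rho f B L \<le> 1 \<longleftrightarrow> (\<forall>r. psi (shift B f) r \<le> psi (shift L f) r)"
proof
  assume "\<forall>r. psi (shift B f) r \<le> psi (shift L f) r"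
  then have "\<forall>R. CB B R f \<subseteq> map (\<lambda>x. x / 1) ` CB L R f"
    using CB_mono[of B f L] by simp
  then show "rho f B L \<le> 1"
    unfolding rho_def one_ereal_def by (intro Inf_lower) auto
next
  assume rho: "rho f B L \<le> 1"
  show "\<forall>r. psi (shift B f) r \<le> psi (shift L f) r"
  proof
    fix r
    show "psi (shift B f) r \<le> psi (shift L f) r"
    proof (rule field_le_mult_one_interval)
      fix z :: real
      assume z: "0 < z" "z < 1"
      \<comment> \<open>rho \<le> 1 < 1/z, so some admissible \<alpha> lies below 1/z\<close>
      then have "rho f B L < ereal (1 / z)"
        using rho by (simp add: one_ereal_def order_le_less_trans)
      then obtain \<alpha> where \<alpha>: "\<alpha> > 0" "\<alpha> < 1 / z"
        and "\<forall>R. CB B R f \<subseteq> map (\<lambda>x. x / \<alpha>) ` CB L R f"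
        unfolding rho_def Inf_less_iff by auto
      then have "psi (shift B f) r \<le> \<alpha> * psi (shift L f) r"
        using psi_le_scaled_psi_if_CB_subset[OF assms] by blast
      also have "\<dots> \<le> (1 / z) * psi (shift L f) r"
        using \<alpha> psi_nonneg[OF assms] by (intro mult_right_mono) auto
      finally show "z * psi (shift B f) r \<le> psi (shift L f) r"
        using z by (simp add: field_simps)
    qed
  qed
qed

theorem proposition3p11:
  fixes f :: "real^'n" and B L :: "(real^'n) set"
  assumes "\<exists>i. f $ i \<notin> \<int>"
    and "convC f B" and "convC f L"
  shows "((\<forall>R::(real^'n) list. CB B R f \<subseteq> CB L R f) \<longleftrightarrow> L \<subseteq> B)
    \<and> (L \<subseteq> B \<longleftrightarrow> (\<forall>r. psi (shift B f) r \<le> psi (shift L f) r))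
    \<and> ((\<forall>r. psi (shift B f) r \<le> psi (shift L f) r) \<longleftrightarrow> rho f B L \<le> 1)"
proof -
  note B = convC_shift[OF assms(2)] and L = convC_shift[OF assms(3)]
  have "L \<subseteq> B \<longleftrightarrow> (\<forall>r. psi (shift B f) r \<le> psi (shift L f) r)"
    using psi_le_psi_iff_subset[OF B L(3)] shift_subset_shift_iff by blast
  then show ?thesis
    using CB_subset_iff_psi_le[OF L(3)] rho_le_1_iff_psi_le[OF L(3)] by blast
qed

end
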